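(* Let $m,n\ge 1$, let $\mathbf{A}\in\mathbb{R}^{n\times m}$, $\bm{\mu}\in\mathbb{R}^m$, let $\mathbf{R}\in\mathbb{R}^{n\times n}$ be symmetric positive definite, and let $b>0$. Define $$\bm{\Sigma}=\left(\left(\mathbf{A}^{\top}\mathbf{R}^{-1}\mathbf{A}\right)\circ\bm{\mu}\bm{\mu}^{\top}+\tfrac{1}{b^2}\mathbf{I}_m\right)^{-1}.$$ Let $\mathbf{c}_k\sim\mathcal{N}(\mathbf{1},b^2\mathbf{I}_m)$ and $\bm{\epsilon}_k\sim\mathcal{N}(\mathbf{0},\mathbf{R})$ be independent, set $\mathbf{y}_k=\mathbf{A}\bm{\mu}+\bm{\epsilon}_k$, and define the Monte Carlo MAP estimator $$\mathbf{c}^k_{MAP}=\bm{\Sigma}\left(\left(\mathbf{A}^{\top}\mathbf{R}^{-1}\mathbf{y}_k\right)\circ\bm{\mu}+\tfrac{1}{b^2}\mathbf{c}_k\right).$$ Then $\mathrm{Cov}[\mathbf{c}^k_{MAP}]=\bm{\Sigma}$, and, with $\bm{\theta}_k=\mathbf{c}^k_{MAP}\circ\bm{\mu}$, $\mathrm{Cov}[\bm{\theta}_k]=\bm{\Sigma}\circ\bm{\mu}\bm{\mu}^{\top}$.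
   Context: $\circ$ denotes the element-wise (Hadamard) product of vectors or matrices of the same shape, and $\mathbf{1}$ is the all-ones vector. In the Bayesian model $\mathbf{c}\sim\mathcal{N}(\mathbf{c}^b,b^2\mathbf{I}_m)$, $\mathbf{y}\mid\mathbf{c}\sim\mathcal{N}(\mathbf{A}(\mathbf{c}\circ\bm{\mu}),\mathbf{R})$, the matrix $\bm{\Sigma}$ above is the posterior covariance of $\mathbf{c}$ given $\mathbf{y}$, $\mathbf{c}^k_{MAP}$ is the posterior mode (MAP estimator) obtained with prior mean $\mathbf{c}_k$ and observation $\mathbf{y}_k$, and $\bm{\Sigma}\circ\bm{\mu}\bm{\mu}^{\top}$ is the posterior covariance of $\bm{\theta}=\mathbf{c}\circ\bm{\mu}$ given $\mathbf{y}$. *)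

theory Defs
  imports "HOL-Probability.Probability"
begin

definition hadamard_vec :: "real^'m \<Rightarrow> real^'m \<Rightarrow> real^'m" where
  "hadamard_vec x y = (\<chi> i. x$i * y$i)"

definition hadamard_mat :: "real^'m^'n \<Rightarrow> real^'m^'n \<Rightarrow> real^'m^'n" where
  "hadamard_mat P Q = (\<chi> i j. P$i$j * Q$i$j)"

definition outer :: "real^'n \<Rightarrow> real^'m \<Rightarrow> real^'m^'n" where
  "outer x y = (\<chi> i j. x$i * y$j)"

definition spd :: "real^'n^'n \<Rightarrow> bool" where
  "spd R \<longleftrightarrow> transpose R = R \<and> (\<forall>x. x \<noteq> 0 \<longrightarrow> x \<bullet> (R *v x) > 0)"

definition mean_vec :: "'a measure \<Rightarrow> ('a \<Rightarrow> real^'k) \<Rightarrow> real^'k" where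
  "mean_vec M X = (\<chi> i. integral\<^sup>L M (\<lambda>\<omega>. X \<omega> $ i))"

definition cov_mat :: "'a measure \<Rightarrow> ('a \<Rightarrow> real^'k) \<Rightarrow> real^'k^'k" where
  "cov_mat M X = (\<chi> i j. integral\<^sup>L M
      (\<lambda>\<omega>. (X \<omega> $ i - mean_vec M X $ i) * (X \<omega> $ j - mean_vec M X $ j)))"

text \<open>Multivariate Gaussian N(m,S): every linear functional a.X is univariate normal
  with mean a.m and variance a.(S a) (a point mass if the variance is zero).\<close>
definition gaussian_vec :: "'a measure \<Rightarrow> ('a \<Rightarrow> real^'k) \<Rightarrow> real^'k \<Rightarrow> real^'k^'k \<Rightarrow> bool" where
  "gaussian_vec M X m S \<longleftrightarrow> X \<in> borel_measurable M \<and>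
     (\<forall>a. (if a \<bullet> (S *v a) = 0
            then (AE \<omega> in M. a \<bullet> X \<omega> = a \<bullet> m)
            else distributed M lborel (\<lambda>\<omega>. a \<bullet> X \<omega>)
                   (normal_density (a \<bullet> m) (sqrt (a \<bullet> (S *v a))))))"

end

theory Submission
  imports Defs
begin

text \<open>The MAP estimator is affine in the independent Gaussian inputs: with \<open>D = diag \<mu>\<close> and
  \<open>B = A D\<close> one has \<open>c\<^sub>M\<^sub>A\<^sub>P = \<kappa> + (1/b\<^sup>2) \<Sigma> c + \<Sigma> B\<^sup>T R\<^sup>-\<^sup>1 \<epsilon>\<close> for a constant \<open>\<kappa>\<close>, and
  \<open>\<Sigma> = (B\<^sup>T R\<^sup>-\<^sup>1 B + b\<^sup>-\<^sup>2 I)\<^sup>-\<^sup>1\<close>. By independence its covariance is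
  \<open>b\<^sup>-\<^sup>4 \<Sigma> (b\<^sup>2 I) \<Sigma> + \<Sigma> B\<^sup>T R\<^sup>-\<^sup>1 R R\<^sup>-\<^sup>1 B \<Sigma> = \<Sigma> (b\<^sup>-\<^sup>2 I + B\<^sup>T R\<^sup>-\<^sup>1 B) \<Sigma> = \<Sigma>\<close>.
  Multiplying componentwise by \<open>\<mu>\<close> scales the covariance entries by \<open>\<mu>\<^sub>i \<mu>\<^sub>j\<close>.\<close>

lemma
  fixes A :: "'a::semiring_1^'n^'n"
  assumes "invertible A"
  shows matrix_inv_right: "A ** matrix_inv A = mat 1"
    and matrix_inv_left: "matrix_inv A ** A = mat 1"
  using someI_ex[of "\<lambda>A'. A ** A' = mat 1 \<and> A' ** A = mat 1"] assms
  unfolding invertible_def matrix_inv_def by auto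

lemma symmetric_matrix_inv:
  fixes A :: "'a::comm_semiring_1^'n^'n"
  assumes "invertible A" "transpose A = A"
  shows "transpose (matrix_inv A) = matrix_inv A"
proof -
  have left_inverse: "transpose (matrix_inv A) ** A = mat 1"
    by (metis assms matrix_inv_right matrix_transpose_mul transpose_mat)
  have "transpose (matrix_inv A) = transpose (matrix_inv A) ** (A ** matrix_inv A)"
    by (simp add: matrix_inv_right[OF assms(1)] matrix_mul_rid)
  also have "\<dots> = matrix_inv A"
    by (simp add: matrix_mul_assoc left_inverse matrix_mul_lid)
  finally show ?thesis .
qed

lemma posdef_imp_invertible:
  fixes A :: "real^'n^'n"
  assumes "\<And>x. x \<noteq> 0 \<Longrightarrow> x \<bullet> (A *v x) > 0"
  shows "invertible A"
proof -
  have "\<forall>x. A *v x = 0 \<longrightarrow> x = 0"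
    using assms by (metis inner_zero_right less_irrefl)
  then show ?thesis
    using matrix_left_invertible_ker invertible_left_inverse by blast
qed

lemma spd_imp_invertible: "spd R \<Longrightarrow> invertible R"
  unfolding spd_def by (simp add: posdef_imp_invertible)

lemma spd_imp_psd: "spd R \<Longrightarrow> x \<bullet> (R *v x) \<ge> 0"
  unfolding spd_def by (cases "x = 0") (auto simp: less_imp_le)

lemma spd_matrix_inv_psd:
  assumes "spd R"
  shows "y \<bullet> (matrix_inv R *v y) \<ge> 0"
proof -
  define z where "z = matrix_inv R *v y"
  have "y = R *v z"
    by (simp add: z_def matrix_vector_mul_assoc matrix_inv_right[OF spd_imp_invertible[OF assms]])
  then have "y \<bullet> (matrix_inv R *v y) = z \<bullet> (R *v z)"
    by (simp add: z_def inner_commute)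
  then show ?thesis
    using spd_imp_psd[OF assms] by simp
qed

lemma transpose_add: "transpose (A + B) = transpose A + transpose (B :: 'a::semiring_1^'n^'m)"
  by (simp add: transpose_def vec_eq_iff)

lemma matrix_add_rdistrib: "(B + C) ** A = B ** A + C ** (A :: 'a::semiring_1^'p^'n)"
  by (vector matrix_matrix_mult_def sum.distrib[symmetric] distrib_right)

lemma inner_transpose_matrix_vector: "(x::real^'n) \<bullet> (transpose B *v y) = (B *v x) \<bullet> y"
  by (metis dot_lmul_matrix inner_commute transpose_matrix_vector)

lemma matrix_mult_transpose_nth:
  fixes P :: "real^'n^'m" and S :: "real^'n^'n"
  shows "(P ** S ** transpose P) $ i $ j = P $ i \<bullet> (S *v P $ j)"
proof -
  have "P $ i \<bullet> (S *v P $ j) = (\<Sum>l\<in>UNIV. \<Sum>k\<in>UNIV. P$i$l * S$l$k * P$j$k)"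
    by (simp add: matrix_vector_mult_def inner_vec_def sum_distrib_left mult.assoc)
  also have "\<dots> = (\<Sum>k\<in>UNIV. \<Sum>l\<in>UNIV. P$i$l * S$l$k * P$j$k)"
    by (rule sum.swap)
  also have "\<dots> = (P ** S ** transpose P) $ i $ j"
    by (simp add: matrix_matrix_mult_def transpose_def sum_distrib_right)
  finally show ?thesis ..
qed

definition diag_mat :: "real^'n \<Rightarrow> real^'n^'n" where
  "diag_mat \<mu> = (\<chi> i j. if i = j then \<mu> $ i else 0)"

lemma transpose_diag_mat [simp]: "transpose (diag_mat \<mu>) = diag_mat \<mu>"
  by (simp add: diag_mat_def transpose_def vec_eq_iff)

lemma hadamard_vec_eq_diag_mat: "hadamard_vec x \<mu> = diag_mat \<mu> *v x"
  by (simp add: hadamard_vec_def diag_mat_def matrix_vector_mult_def if_distrib if_distribR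
      sum.delta' vec_eq_iff mult.commute cong: if_cong)

lemma hadamard_outer_eq_diag_mat:
  "hadamard_mat X (outer \<mu> \<mu>) = diag_mat \<mu> ** X ** diag_mat \<mu>"
  by (simp add: hadamard_mat_def outer_def diag_mat_def matrix_matrix_mult_def vec_eq_iff
      if_distrib if_distribR sum.delta' mult_ac cong: if_cong)

text \<open>For the linear Gaussian model \<open>y = B x + \<epsilon>\<close> with prior \<open>x \<sim> N(x\<^sub>0, v I)\<close> and noise
  \<open>\<epsilon> \<sim> N(0, R)\<close>, the MAP estimate \<open>\<Sigma> (B\<^sup>T R\<^sup>-\<^sup>1 y + x\<^sub>0 / v)\<close> has covariance equal to the
  posterior covariance \<open>\<Sigma>\<close> when \<open>x\<^sub>0\<close> and \<open>y\<close> are drawn independently.\<close>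
lemma posterior_covariance_identity:
  fixes B :: "real^'m^'n" and R :: "real^'n^'n" and v :: real
  assumes "spd R" and "v > 0"
  defines "\<Sigma> \<equiv> matrix_inv (transpose B ** matrix_inv R ** B + (1 / v) *\<^sub>R mat 1)"
  shows "((1 / v) *\<^sub>R \<Sigma>) ** (v *\<^sub>R mat 1) ** transpose ((1 / v) *\<^sub>R \<Sigma>)
       + (\<Sigma> ** transpose B ** matrix_inv R) ** R ** transpose (\<Sigma> ** transpose B ** matrix_inv R)
       = \<Sigma>"
proof -
  define H where "H = transpose B ** matrix_inv R ** B"
  define G where "G = H + (1 / v) *\<^sub>R mat 1"
  have R: "invertible R" "transpose R = R"
    using assms(1) by (auto simp: spd_imp_invertible spd_def)
  have Rinv_sym: "transpose (matrix_inv R) = matrix_inv R"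
    using symmetric_matrix_inv[OF R] .
  have G_posdef: "x \<bullet> (G *v x) > 0" if "x \<noteq> 0" for x
  proof -
    have "x \<bullet> (H *v x) = (B *v x) \<bullet> (matrix_inv R *v (B *v x))"
      by (simp add: H_def matrix_vector_mul_assoc[symmetric] inner_transpose_matrix_vector
          del: transpose_matrix_vector)
    then have "x \<bullet> (H *v x) \<ge> 0"
      using spd_matrix_inv_psd[OF assms(1)] by simp
    moreover have "(1 / v) * (x \<bullet> x) > 0"
      using that assms(2) by simp
    ultimately show ?thesis
      by (simp add: G_def matrix_vector_mult_add_rdistrib inner_add_right
          scaleR_matrix_vector_assoc[symmetric])
  qed
  have G_sym: "transpose G = G"
    by (simp add: G_def H_def transpose_add transpose_scalar matrix_transpose_mul Rinv_sym
        matrix_mul_assoc)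
  have G: "invertible G"
    using posdef_imp_invertible G_posdef by blast
  have \<Sigma>_sym: "transpose \<Sigma> = \<Sigma>"
    using symmetric_matrix_inv[OF G G_sym] by (simp add: \<Sigma>_def H_def G_def)
  have prior_term: "((1 / v) *\<^sub>R \<Sigma>) ** (v *\<^sub>R mat 1) ** transpose ((1 / v) *\<^sub>R \<Sigma>)
      = (1 / v) *\<^sub>R (\<Sigma> ** \<Sigma>)"
    using assms(2) by (simp add: transpose_scalar \<Sigma>_sym scalar_matrix_assoc matrix_scalar_ac
        matrix_mul_rid)
  have noise_term: "(\<Sigma> ** transpose B ** matrix_inv R) ** R ** transpose (\<Sigma> ** transpose B ** matrix_inv R)
      = \<Sigma> ** H ** \<Sigma>"
  proof -
    have "X ** matrix_inv R ** R = X" for X :: "real^'n^'m"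
      by (simp add: matrix_mul_assoc[symmetric] matrix_inv_left[OF R(1)] matrix_mul_rid)
    then show ?thesis
      by (simp add: matrix_transpose_mul Rinv_sym \<Sigma>_sym matrix_mul_assoc H_def)
  qed
  have "\<Sigma> = \<Sigma> ** G ** \<Sigma>"
    by (simp add: \<Sigma>_def G_def H_def matrix_inv_left[OF G[unfolded G_def H_def]] matrix_mul_lid)
  also have "\<dots> = (1 / v) *\<^sub>R (\<Sigma> ** \<Sigma>) + \<Sigma> ** H ** \<Sigma>"
    by (simp add: G_def matrix_add_ldistrib matrix_add_rdistrib scalar_matrix_assoc
        matrix_scalar_ac matrix_mul_rid)
  finally show ?thesis
    by (simp add: prior_term noise_term)
qed

definition has_mean_cov :: "'a measure \<Rightarrow> ('a \<Rightarrow> real^'k) \<Rightarrow> real^'k \<Rightarrow> real^'k^'k \<Rightarrow> bool" where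
  "has_mean_cov M X m S \<longleftrightarrow>
     (\<forall>a. integrable M (\<lambda>\<omega>. a \<bullet> X \<omega>) \<and> (\<integral>\<omega>. a \<bullet> X \<omega> \<partial>M) = a \<bullet> m) \<and>
     (\<forall>a b. integrable M (\<lambda>\<omega>. (a \<bullet> X \<omega> - a \<bullet> m) * (b \<bullet> X \<omega> - b \<bullet> m)) \<and>
        (\<integral>\<omega>. (a \<bullet> X \<omega> - a \<bullet> m) * (b \<bullet> X \<omega> - b \<bullet> m) \<partial>M) = a \<bullet> (S *v b))"

lemma (in prob_space) normal_or_degenerate_moments:
  fixes Y :: "'a \<Rightarrow> real"
  assumes Y: "random_variable borel Y" and "v \<ge> 0"
    and law: "if v = 0 then (AE \<omega> in M. Y \<omega> = m)
              else distributed M lborel Y (normal_density m (sqrt v))"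
  shows "integrable M Y" "expectation Y = m"
    and "integrable M (\<lambda>\<omega>. (Y \<omega> - m)\<^sup>2)" "expectation (\<lambda>\<omega>. (Y \<omega> - m)\<^sup>2) = v"
proof -
  have "integrable M Y \<and> expectation Y = m \<and>
    integrable M (\<lambda>\<omega>. (Y \<omega> - m)\<^sup>2) \<and> expectation (\<lambda>\<omega>. (Y \<omega> - m)\<^sup>2) = v"
  proof (cases "v = 0")
    case True
    have ae: "AE \<omega> in M. Y \<omega> = m"
      using law True by simp
    then have ae_square: "AE \<omega> in M. (Y \<omega> - m)\<^sup>2 = 0"
      by auto
    have square: "random_variable borel (\<lambda>\<omega>. (Y \<omega> - m)\<^sup>2)"
      using Y by measurable
    show ?thesis
      using integrable_cong_AE[OF Y _ ae] integral_cong_AE[OF Y _ ae]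
        integrable_cong_AE[OF square _ ae_square] integral_cong_AE[OF square _ ae_square] True
      by (simp add: prob_space)
  next
    case False
    then have \<sigma>: "sqrt v > 0"
      using \<open>v \<ge> 0\<close> by simp
    have D: "distributed M lborel Y (normal_density m (sqrt v))"
      using law False by simp
    have "expectation Y = m"
      using normal_distributed_expectation[OF \<sigma> D] .
    moreover have "variance Y = v"
      using normal_distributed_variance[OF \<sigma> D] \<open>v \<ge> 0\<close> by simp
    ultimately show ?thesis
      using distributed_integrable[OF D, of "\<lambda>x. x"] integrable_normal_moment_nz_1[OF \<sigma>, of m]
        distributed_integrable[OF D, of "\<lambda>x. (x - m)\<^sup>2"] integrable_normal_moment[OF \<sigma>, of m 2]
      by simp
  qed
  then show "integrable M Y" "expectation Y = m"
    and "integrable M (\<lambda>\<omega>. (Y \<omega> - m)\<^sup>2)" "expectation (\<lambda>\<omega>. (Y \<omega> - m)\<^sup>2) = v"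
    by blast+
qed

lemma (in prob_space) gaussian_vec_has_mean_cov:
  fixes X :: "'a \<Rightarrow> real^'k"
  assumes G: "gaussian_vec M X m S" and "transpose S = S" and "\<And>a. a \<bullet> (S *v a) \<ge> 0"
  shows "has_mean_cov M X m S"
proof -
  have X: "random_variable borel X"
    using G by (simp add: gaussian_vec_def)
  have moments: "integrable M (\<lambda>\<omega>. a \<bullet> X \<omega>)" "expectation (\<lambda>\<omega>. a \<bullet> X \<omega>) = a \<bullet> m"
    "integrable M (\<lambda>\<omega>. (a \<bullet> X \<omega> - a \<bullet> m)\<^sup>2)"
    "expectation (\<lambda>\<omega>. (a \<bullet> X \<omega> - a \<bullet> m)\<^sup>2) = a \<bullet> (S *v a)" for a
  proof -
    have rv: "random_variable borel (\<lambda>\<omega>. a \<bullet> X \<omega>)"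
      using X by measurable
    have law: "if a \<bullet> (S *v a) = 0 then AE \<omega> in M. a \<bullet> X \<omega> = a \<bullet> m
      else distributed M lborel (\<lambda>\<omega>. a \<bullet> X \<omega>) (normal_density (a \<bullet> m) (sqrt (a \<bullet> (S *v a))))"
      using G unfolding gaussian_vec_def by blast
    show "integrable M (\<lambda>\<omega>. a \<bullet> X \<omega>)" "expectation (\<lambda>\<omega>. a \<bullet> X \<omega>) = a \<bullet> m"
      "integrable M (\<lambda>\<omega>. (a \<bullet> X \<omega> - a \<bullet> m)\<^sup>2)"
      "expectation (\<lambda>\<omega>. (a \<bullet> X \<omega> - a \<bullet> m)\<^sup>2) = a \<bullet> (S *v a)"
      using normal_or_degenerate_moments[OF rv assms(3)[of a] law] by simp_all
  qed
  have S_sym: "a \<bullet> (S *v b) = b \<bullet> (S *v a)" for a b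
    by (metis dot_lmul_matrix inner_commute assms(2) vector_transpose_matrix)
  have polarization: "(a \<bullet> x - a \<bullet> m) * (b \<bullet> x - b \<bullet> m) =
      (((a + b) \<bullet> x - (a + b) \<bullet> m)\<^sup>2 - (a \<bullet> x - a \<bullet> m)\<^sup>2 - (b \<bullet> x - b \<bullet> m)\<^sup>2) / 2" for a b x
    by (simp add: inner_add_left power2_eq_square algebra_simps)
  have cross: "integrable M (\<lambda>\<omega>. (a \<bullet> X \<omega> - a \<bullet> m) * (b \<bullet> X \<omega> - b \<bullet> m)) \<and>
      expectation (\<lambda>\<omega>. (a \<bullet> X \<omega> - a \<bullet> m) * (b \<bullet> X \<omega> - b \<bullet> m)) = a \<bullet> (S *v b)" for a b
  proof -
    have "(a + b) \<bullet> (S *v (a + b)) - a \<bullet> (S *v a) - b \<bullet> (S *v b) = 2 * (a \<bullet> (S *v b))"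
      using S_sym[of a b] by (simp add: matrix_vector_right_distrib inner_add_left inner_add_right)
    then show ?thesis
      unfolding polarization
      using moments[of "a + b"] moments[of a] moments[of b]
      by (simp add: Bochner_Integration.integral_diff)
  qed
  show ?thesis
    unfolding has_mean_cov_def using moments(1,2) cross by blast
qed

lemma (in prob_space) indep_var_compose_of_joint_distr:
  fixes X :: "'a \<Rightarrow> 'b::topological_space" and Y :: "'a \<Rightarrow> 'c::topological_space"
    and f :: "'b \<Rightarrow> 'd::topological_space" and g :: "'c \<Rightarrow> 'd"
  assumes X: "random_variable borel X" and Y: "random_variable borel Y"
    and indep: "distr M (borel \<Otimes>\<^sub>M borel) (\<lambda>\<omega>. (X \<omega>, Y \<omega>)) = distr M borel X \<Otimes>\<^sub>M distr M borel Y"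
    and f: "f \<in> borel_measurable borel" and g: "g \<in> borel_measurable borel"
  shows "indep_var borel (\<lambda>\<omega>. f (X \<omega>)) borel (\<lambda>\<omega>. g (Y \<omega>))"
proof -
  have distr_f: "distr M borel (\<lambda>\<omega>. f (X \<omega>)) = distr (distr M borel X) borel f"
    and distr_g: "distr M borel (\<lambda>\<omega>. g (Y \<omega>)) = distr (distr M borel Y) borel g"
    using distr_distr[OF f X] distr_distr[OF g Y] by (simp_all add: comp_def)
  have "sigma_finite_measure (distr (distr M borel Y) borel g)"
    using prob_space_distr[OF measurable_compose[OF Y g]] distr_g
    by (simp add: prob_space_imp_sigma_finite)
  then have "distr M borel (\<lambda>\<omega>. f (X \<omega>)) \<Otimes>\<^sub>M distr M borel (\<lambda>\<omega>. g (Y \<omega>))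
      = distr (distr M borel X \<Otimes>\<^sub>M distr M borel Y) (borel \<Otimes>\<^sub>M borel) (\<lambda>(x, y). (f x, g y))"
    unfolding distr_f distr_g using f g by (intro pair_measure_distr) simp_all
  also have "\<dots> = distr M (borel \<Otimes>\<^sub>M borel) (\<lambda>\<omega>. (f (X \<omega>), g (Y \<omega>)))"
    unfolding indep[symmetric] using X Y f g
    by (subst distr_distr) (auto simp: comp_def)
  finally show ?thesis
    using X Y f g by (simp add: indep_var_distribution_eq)
qed

lemma (in prob_space) indep_has_mean_cov_uncorrelated:
  assumes "random_variable borel X" and "random_variable borel Y"
    and "distr M (borel \<Otimes>\<^sub>M borel) (\<lambda>\<omega>. (X \<omega>, Y \<omega>)) = distr M borel X \<Otimes>\<^sub>M distr M borel Y"
    and X: "has_mean_cov M X m\<^sub>X S\<^sub>X" and Y: "has_mean_cov M Y m\<^sub>Y S\<^sub>Y"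
  shows "integrable M (\<lambda>\<omega>. (a \<bullet> X \<omega> - a \<bullet> m\<^sub>X) * (b \<bullet> Y \<omega> - b \<bullet> m\<^sub>Y))"
    and "expectation (\<lambda>\<omega>. (a \<bullet> X \<omega> - a \<bullet> m\<^sub>X) * (b \<bullet> Y \<omega> - b \<bullet> m\<^sub>Y)) = 0"
proof -
  have indep_centered:
    "indep_var borel (\<lambda>\<omega>. a \<bullet> X \<omega> - a \<bullet> m\<^sub>X) borel (\<lambda>\<omega>. b \<bullet> Y \<omega> - b \<bullet> m\<^sub>Y)"
    by (rule indep_var_compose_of_joint_distr[OF assms(1-3)]) simp_all
  have "integrable M (\<lambda>\<omega>. a \<bullet> X \<omega> - a \<bullet> m\<^sub>X)" "expectation (\<lambda>\<omega>. a \<bullet> X \<omega> - a \<bullet> m\<^sub>X) = 0"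
    using X by (auto simp: has_mean_cov_def prob_space)
  moreover have "integrable M (\<lambda>\<omega>. b \<bullet> Y \<omega> - b \<bullet> m\<^sub>Y)"
    using Y by (simp add: has_mean_cov_def)
  ultimately show "integrable M (\<lambda>\<omega>. (a \<bullet> X \<omega> - a \<bullet> m\<^sub>X) * (b \<bullet> Y \<omega> - b \<bullet> m\<^sub>Y))"
    and "expectation (\<lambda>\<omega>. (a \<bullet> X \<omega> - a \<bullet> m\<^sub>X) * (b \<bullet> Y \<omega> - b \<bullet> m\<^sub>Y)) = 0"
    using indep_var_integrable[OF indep_centered] indep_var_lebesgue_integral[OF indep_centered]
    by simp_all
qed

lemma (in prob_space) cov_mat_affine_indep:
  assumes "random_variable borel X" and "random_variable borel Y"
    and "distr M (borel \<Otimes>\<^sub>M borel) (\<lambda>\<omega>. (X \<omega>, Y \<omega>)) = distr M borel X \<Otimes>\<^sub>M distr M borel Y"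
    and X: "has_mean_cov M X m\<^sub>X S\<^sub>X" and Y: "has_mean_cov M Y m\<^sub>Y S\<^sub>Y"
  shows "cov_mat M (\<lambda>\<omega>. k + P *v X \<omega> + Q *v Y \<omega>)
       = P ** S\<^sub>X ** transpose P + Q ** S\<^sub>Y ** transpose Q"
proof -
  define Z where "Z = (\<lambda>\<omega>. k + P *v X \<omega> + Q *v Y \<omega>)"
  define U where "U i \<omega> = P $ i \<bullet> X \<omega> - P $ i \<bullet> m\<^sub>X" for i \<omega>
  define V where "V i \<omega> = Q $ i \<bullet> Y \<omega> - Q $ i \<bullet> m\<^sub>Y" for i \<omega>
  have mean: "mean_vec M Z $ i = k $ i + P $ i \<bullet> m\<^sub>X + Q $ i \<bullet> m\<^sub>Y" for i
    using X Y
    by (simp add: mean_vec_def Z_def matrix_vector_mul_component has_mean_cov_def prob_space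
        Bochner_Integration.integral_add)
  have centered: "Z \<omega> $ i - mean_vec M Z $ i = U i \<omega> + V i \<omega>" for \<omega> i
    unfolding mean by (simp add: Z_def U_def V_def matrix_vector_mul_component)
  have "cov_mat M Z $ i $ j = (P ** S\<^sub>X ** transpose P + Q ** S\<^sub>Y ** transpose Q) $ i $ j" for i j
  proof -
    have "cov_mat M Z $ i $ j
        = expectation (\<lambda>\<omega>. U i \<omega> * U j \<omega> + U i \<omega> * V j \<omega> + U j \<omega> * V i \<omega> + V i \<omega> * V j \<omega>)"
      by (simp add: cov_mat_def centered algebra_simps)
    also have "\<dots> = P $ i \<bullet> (S\<^sub>X *v P $ j) + Q $ i \<bullet> (S\<^sub>Y *v Q $ j)"
      using X Y indep_has_mean_cov_uncorrelated[OF assms(1-3) X Y]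
      by (simp add: U_def V_def has_mean_cov_def)
    also have "\<dots> = (P ** S\<^sub>X ** transpose P + Q ** S\<^sub>Y ** transpose Q) $ i $ j"
      by (simp add: matrix_mult_transpose_nth)
    finally show ?thesis .
  qed
  then show ?thesis
    by (simp add: Z_def vec_eq_iff)
qed

lemma cov_mat_hadamard_vec:
  "cov_mat M (\<lambda>\<omega>. hadamard_vec (X \<omega>) \<mu>) = hadamard_mat (cov_mat M X) (outer \<mu> \<mu>)"
proof -
  have "(X \<omega> $ i * \<mu> $ i - mean_vec M X $ i * \<mu> $ i) * (X \<omega> $ j * \<mu> $ j - mean_vec M X $ j * \<mu> $ j)
     = (X \<omega> $ i - mean_vec M X $ i) * (X \<omega> $ j - mean_vec M X $ j) * (\<mu> $ i * \<mu> $ j)" for \<omega> i j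
    by (simp add: algebra_simps)
  then show ?thesis
    by (simp add: cov_mat_def mean_vec_def hadamard_vec_def hadamard_mat_def outer_def vec_eq_iff)
qed

theorem mainTheorem1:
  fixes M :: "'a measure"
    and A :: "real^'m^'n" and \<mu> :: "real^'m" and R :: "real^'n^'n" and b :: real
    and c :: "'a \<Rightarrow> real^'m" and \<epsilon> :: "'a \<Rightarrow> real^'n"
  assumes "prob_space M"
    and "spd R"
    and "b > 0"
    and "gaussian_vec M c 1 (b\<^sup>2 *\<^sub>R mat 1)"
    and "gaussian_vec M \<epsilon> 0 R"
    and "distr M (borel \<Otimes>\<^sub>M borel) (\<lambda>\<omega>. (c \<omega>, \<epsilon> \<omega>)) = distr M borel c \<Otimes>\<^sub>M distr M borel \<epsilon>"
  shows "let \<Sigma> = matrix_inv (hadamard_mat (transpose A ** matrix_inv R ** A) (outer \<mu> \<mu>)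
                             + (1 / b\<^sup>2) *\<^sub>R mat 1);
             y = (\<lambda>\<omega>. A *v \<mu> + \<epsilon> \<omega>);
             cMAP = (\<lambda>\<omega>. \<Sigma> *v (hadamard_vec (transpose A *v (matrix_inv R *v y \<omega>)) \<mu>
                                  + (1 / b\<^sup>2) *\<^sub>R c \<omega>));
             \<theta> = (\<lambda>\<omega>. hadamard_vec (cMAP \<omega>) \<mu>)
         in cov_mat M cMAP = \<Sigma> \<and> cov_mat M \<theta> = hadamard_mat \<Sigma> (outer \<mu> \<mu>)"
proof -
  interpret prob_space M by fact
  define B where "B = A ** diag_mat \<mu>"
  define \<Sigma> where "\<Sigma> = matrix_inv (transpose B ** matrix_inv R ** B + (1 / b\<^sup>2) *\<^sub>R mat 1)"
  define P where "P = \<Sigma> ** transpose B ** matrix_inv R"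
  define Q where "Q = (1 / b\<^sup>2) *\<^sub>R \<Sigma>"
  have \<Sigma>_eq: "matrix_inv (hadamard_mat (transpose A ** matrix_inv R ** A) (outer \<mu> \<mu>)
      + (1 / b\<^sup>2) *\<^sub>R mat 1) = \<Sigma>"
    by (simp add: \<Sigma>_def B_def hadamard_outer_eq_diag_mat matrix_transpose_mul matrix_mul_assoc)
  have cMAP_affine: "\<Sigma> *v (hadamard_vec (transpose A *v (matrix_inv R *v (A *v \<mu> + \<epsilon> \<omega>))) \<mu>
      + (1 / b\<^sup>2) *\<^sub>R c \<omega>) = P *v (A *v \<mu>) + Q *v c \<omega> + P *v \<epsilon> \<omega>" for \<omega>
    by (simp add: P_def Q_def B_def hadamard_vec_eq_diag_mat matrix_transpose_mul
        matrix_vector_right_distrib matrix_vector_mul_assoc scaleR_matrix_vector_assoc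
        matrix_vector_mult_scaleR matrix_mul_assoc add_ac del: transpose_matrix_vector)
  have c: "random_variable borel c" and \<epsilon>: "random_variable borel \<epsilon>"
    using assms(4,5) by (simp_all add: gaussian_vec_def)
  have c_moments: "has_mean_cov M c 1 (b\<^sup>2 *\<^sub>R mat 1)"
    using assms(4) by (rule gaussian_vec_has_mean_cov)
      (simp_all add: transpose_scalar scaleR_matrix_vector_assoc[symmetric])
  have \<epsilon>_moments: "has_mean_cov M \<epsilon> 0 R"
    using assms(5) by (rule gaussian_vec_has_mean_cov)
      (use assms(2) spd_imp_psd in \<open>auto simp: spd_def\<close>)
  have "cov_mat M (\<lambda>\<omega>. P *v (A *v \<mu>) + Q *v c \<omega> + P *v \<epsilon> \<omega>) = \<Sigma>"
    unfolding cov_mat_affine_indep[OF c \<epsilon> assms(6) c_moments \<epsilon>_moments] P_def Q_def \<Sigma>_def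
    using assms(2,3) by (simp add: posterior_covariance_identity)
  then show ?thesis
    by (simp only: Let_def \<Sigma>_eq cMAP_affine cov_mat_hadamard_vec)
qed

end
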